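(* For any odd prime $p$ and any irreducible polynomial $P(t)\in\mathbb{F}_p[t]$, the Laurent series $\Phi(t):=\Theta_p(P(t))\in\mathbb{F}_p(\!(t^{-1})\!)$ exhibits full maximal escape of mass with respect to the sequence $\{P(t)^k\}_{k\ge0}$.
   Context: The $p$-Cantor sequence: for an odd prime $p$, $p_2=\frac{p-1}{2}$, identify $\{0,\dots,p-1\}$ with $\mathbb{F}_p$ and let $\phi_p(n)$ be the word of length $p$ whose $i$-th letter ($0\le i\le p-1$) is $n\binom{p_2}{i/2}\bmod p$ for even $i$ and $0$ for odd $i$; $\phi_p$ acts on words by concatenation. $(c^{(p)}_i)_{i\ge0}=\lim_n\phi_p^n(1)$ and $\Theta_p(t)=t^{-1}\sum_{i\ge0}c^{(p)}_it^{-i}$. For $\Theta(t)=\sum_{i=-h}^\infty a_it^{-i}$, $\Theta(P(t)):=\sum_{i=-h}^\infty a_iP(t)^{-i}$. Maximal escape of mass: for a quadratic irrational $\Theta\in\mathbb{F}_q(\!(t^{-1})\!)$ and irreducible $P$, let $\ell_{\Theta P^k}$ be the period length of the eventually periodic continued fraction of $\Theta P^k$ and $A_1^{[\Theta P^k]},\dots,A^{[\Theta P^k]}_{\ell_{\Theta P^k}}$ the partial quotients of one period; $R_{k,n}=\frac{\sum_i\max\{\deg A_i^{[\Theta P^k]}-n,0\}}{\sum_i\deg A_i^{[\Theta P^k]}}$. $\Theta$ exhibits $c$-maximal escape of mass w.r.t. $\{P^k\}$ if $\lim_{n\to\infty}\limsup_{k\to\infty}R_{k,n}\ge c$, and full maximal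 escape of mass if this holds with $c=1$. *)

theory Defs
  imports "HOL-Computational_Algebra.Computational_Algebra" "HOL-Library.Extended_Real"
    "HOL-Library.Liminf_Limsup"
begin

text \<open>The field F_q((t^-1)) is modelled by the type 'a fls of formal Laurent
  series in the variable X = t^-1 (finitely many negative powers of X). A polynomial
  A(t) in F_q[t] is the Laurent series sum_j a_j X^-j.\<close>

definition tpoly :: "'a::comm_ring_1 poly \<Rightarrow> 'a fls" where
  "tpoly A = (\<Sum>j\<le>degree A. fls_const (coeff A j) * fls_X_inv ^ j)"

definition lpoly_part :: "'a::comm_ring_1 fls \<Rightarrow> 'a poly" where
  "lpoly_part th = (\<Sum>j\<le>nat (- fls_subdegree th). monom (fls_nth th (- int j)) j)"

primrec cf_state :: "'a::field fls \<Rightarrow> nat \<Rightarrow> 'a fls" where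
  "cf_state th 0 = th"
| "cf_state th (Suc n) = inverse (cf_state th n - tpoly (lpoly_part (cf_state th n)))"

definition cf_pq :: "'a::field fls \<Rightarrow> nat \<Rightarrow> 'a poly" where
  "cf_pq th n = lpoly_part (cf_state th n)"

definition cf_period :: "'a::field fls \<Rightarrow> nat" where
  "cf_period th = (LEAST l. 0 < l \<and> (\<exists>N. \<forall>m\<ge>N. cf_pq th (m + l) = cf_pq th m))"

definition cf_preperiod :: "'a::field fls \<Rightarrow> nat" where
  "cf_preperiod th = (LEAST N. \<forall>m\<ge>N. cf_pq th (m + cf_period th) = cf_pq th m)"

definition cf_period_idx :: "'a::field fls \<Rightarrow> nat set" where
  "cf_period_idx th = {cf_preperiod th ..< cf_preperiod th + cf_period th}"

definition quadratic_irrational :: "'a::field fls \<Rightarrow> bool" where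
  "quadratic_irrational th \<longleftrightarrow>
     (\<exists>a b c :: 'a poly. a \<noteq> 0 \<and> tpoly a * th ^ 2 + tpoly b * th + tpoly c = 0) \<and>
     \<not> (\<exists>u v :: 'a poly. v \<noteq> 0 \<and> tpoly v * th = tpoly u)"

definition escape_ratio :: "'a::field fls \<Rightarrow> 'a poly \<Rightarrow> nat \<Rightarrow> nat \<Rightarrow> real" where
  "escape_ratio th P k n =
     (let x = th * tpoly (P ^ k) in
      real (\<Sum>i\<in>cf_period_idx x. max (degree (cf_pq x i) - n) 0)
      / real (\<Sum>i\<in>cf_period_idx x. degree (cf_pq x i)))"

definition c_max_escape :: "real \<Rightarrow> 'a::field fls \<Rightarrow> 'a poly \<Rightarrow> bool" where
  "c_max_escape c th P \<longleftrightarrow>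
     (\<exists>L. (\<lambda>n. limsup (\<lambda>k. ereal (escape_ratio th P k n))) \<longlonglongrightarrow> L \<and> L \<ge> ereal c)"

definition full_max_escape :: "'a::field fls \<Rightarrow> 'a poly \<Rightarrow> bool" where
  "full_max_escape th P \<longleftrightarrow> c_max_escape 1 th P"

text \<open>The p-Cantor substitution on words over F_p (letters are field elements; the field
  has characteristic p, so of_nat realises reduction mod p).\<close>
definition cantor_phi :: "nat \<Rightarrow> 'a::field list \<Rightarrow> 'a list" where
  "cantor_phi p w = concat (map (\<lambda>a. map (\<lambda>i. if even i then a * of_nat (((p - 1) div 2) choose (i div 2))
                                               else 0) [0..<p]) w)"

text \<open>c_i is the i-th letter of the limit word lim phi^n(1); phi^(i+1)(1) has length p^(i+1) > i.\<close>
definition cantor_seq :: "nat \<Rightarrow> nat \<Rightarrow> 'a::field" where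
  "cantor_seq p i = ((cantor_phi p ^^ Suc i) [1]) ! i"

text \<open>Theta_p(t) = t^-1 sum c_i t^-i, a power series in X = t^-1 with zero constant term.\<close>
definition Theta_fps :: "nat \<Rightarrow> 'a::field fps" where
  "Theta_fps p = Abs_fps (\<lambda>n. if n = 0 then 0 else cantor_seq p (n - 1))"

definition Theta :: "nat \<Rightarrow> 'a::field fls" where
  "Theta p = fps_to_fls (Theta_fps p)"

text \<open>Theta_p(P(t)) = sum_i a_i P(t)^-i, i.e. composition of the power series (in X) Theta_p
  with 1/P(t), which is a power series in X with zero constant term when deg P \<ge> 1.\<close>
definition Theta_at :: "nat \<Rightarrow> 'a::field poly \<Rightarrow> 'a fls" where
  "Theta_at p P = fps_to_fls (Theta_fps p oo fls_regpart (inverse (tpoly P)))"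

end

theory Submission
  imports Defs "HOL-Library.Sublist" "HOL-Number_Theory.Residues"
begin

text \<open>Let \<open>U\<close> be the generating series of the \<open>p\<close>-Cantor sequence, so that \<open>\<Theta>\<^sub>p = X U\<close> with
  \<open>X = t\<^sup>-\<^sup>1\<close>. The substitution rule reads \<open>U = B \<cdot> U(X\<^sup>p)\<close> with \<open>B = (1 + X\<^sup>2)\<^bsup>(p-1)/2\<^esup>\<close>, and since
  \<open>B\<^sup>2 (1 + X\<^sup>2) = (1 + X\<^sup>2)\<^sup>p = 1 + X\<^bsup>2p\<^esup>\<close> in characteristic \<open>p\<close>, the series \<open>U\<^sup>2 (1 + X\<^sup>2)\<close> is
  invariant under \<open>X \<mapsto> X\<^sup>p\<close>, hence equal to 1. Substituting \<open>X = 1/P\<close> gives \<open>D \<Phi>\<^sup>2 = 1\<close> for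
  \<open>\<Phi> = \<Theta>\<^sub>p(P)\<close> and \<open>D = P\<^sup>2 + 1\<close>, so \<open>\<Phi>\<close> is quadratic.

  For \<open>k = p\<^sup>j = 2e + 1\<close> Frobenius gives \<open>D\<^sup>k = P\<^bsup>2k\<^esup> + 1\<close>, so \<open>x = \<Phi> P\<^sup>k\<close> satisfies
  \<open>x\<^sup>2 = D\<^bsup>2e\<^esup> - 1/D\<close>. Such an \<open>x\<close> has the continued fraction
  \<open>[D\<^sup>e; -2D\<^bsup>e+1\<^esup>, 2D\<^sup>e, -2D\<^bsup>e+1\<^esup>, 2D\<^sup>e, \<dots>]\<close>. It is infinite, so \<open>\<Phi>\<close> is irrational, and its
  period consists of two partial quotients of total degree \<open>2 k deg P\<close>, of which at most \<open>2n\<close> lies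
  below level \<open>n\<close>; hence \<open>R\<^sub>k\<^sub>,\<^sub>n \<ge> 1 - n/k\<close>, which tends to 1 along \<open>k = p\<^sup>j\<close>.\<close>

unbundle fps_syntax

section \<open>Polynomials as Laurent series in \<open>t\<^sup>-\<^sup>1\<close>\<close>

lemma fls_nth_tpoly: "tpoly A $$ n = (if n \<le> 0 then Polynomial.coeff A (nat (- n)) else 0)"
proof -
  have "tpoly A $$ n = (\<Sum>j\<le>degree A. if n = - int j then Polynomial.coeff A j else 0)"
    unfolding tpoly_def fls_nth_sum by (intro sum.cong) auto
  also have "\<dots> = (\<Sum>j\<le>degree A. if n \<le> 0 \<and> j = nat (- n) then Polynomial.coeff A j else 0)"
    by (intro sum.cong) auto
  also have "\<dots> = (if n \<le> 0 then Polynomial.coeff A (nat (- n)) else 0)"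
    by (auto simp: coeff_eq_0)
  finally show ?thesis .
qed

lemma tpoly_pCons: "tpoly (pCons a A) = fls_const a + fls_X_inv * tpoly A"
  by (rule fls_eqI)
    (auto simp: fls_nth_tpoly fls_X_inv_times_conv_shift coeff_pCons nat_diff_distrib split: nat.split)

lemma tpoly_0 [simp]: "tpoly 0 = 0"
  by (rule fls_eqI) (simp add: fls_nth_tpoly)

lemma tpoly_1 [simp]: "tpoly 1 = 1"
  using tpoly_pCons[of 1 0] by (simp add: one_pCons)

lemma tpoly_add [simp]: "tpoly (A + B) = tpoly A + tpoly B"
  by (rule fls_eqI) (simp add: fls_nth_tpoly)

lemma tpoly_minus [simp]: "tpoly (- A) = - tpoly A"
  by (rule fls_eqI) (simp add: fls_nth_tpoly)

lemma tpoly_diff [simp]: "tpoly (A - B) = tpoly A - tpoly B"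
  by (rule fls_eqI) (simp add: fls_nth_tpoly)

lemma tpoly_smult [simp]: "tpoly (Polynomial.smult c A) = fls_const c * tpoly A"
  by (rule fls_eqI) (simp add: fls_nth_tpoly)

lemma tpoly_mult [simp]: "tpoly (A * B) = tpoly A * tpoly B"
  by (induction A) (simp_all add: tpoly_pCons algebra_simps)

lemma tpoly_power [simp]: "tpoly (A ^ n) = tpoly A ^ n"
  by (induction n) simp_all

lemma tpoly_eq_0_iff [simp]: "tpoly A = 0 \<longleftrightarrow> A = 0"
proof
  assume "tpoly A = 0"
  then have "Polynomial.coeff A n = 0" for n
    using fls_nth_tpoly[of A "- int n"] by simp
  then show "A = 0"
    by (simp add: poly_eq_iff)
qed simp

lemma fls_subdegree_tpoly: "A \<noteq> 0 \<Longrightarrow> fls_subdegree (tpoly A) = - int (degree A)"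
  by (rule fls_subdegree_eqI) (auto simp: fls_nth_tpoly coeff_eq_0)

section \<open>Continued fractions and escape ratios\<close>

lemma lpoly_part_eqI:
  assumes "\<And>j. th $$ (- int j) = Polynomial.coeff A j"
  shows "lpoly_part th = A"
proof (rule poly_eqI)
  fix n
  have bound: "j \<le> nat (- fls_subdegree th)" if "Polynomial.coeff A j \<noteq> 0" for j
    using fls_subdegree_leI[of th "- int j"] assms that by simp
  have "Polynomial.coeff (lpoly_part th) n
      = (\<Sum>j\<le>nat (- fls_subdegree th). if j = n then Polynomial.coeff A j else 0)"
    unfolding lpoly_part_def coeff_sum by (intro sum.cong) (auto simp: assms coeff_monom)
  also have "\<dots> = Polynomial.coeff A n"
    using bound[of n] by auto
  finally show "Polynomial.coeff (lpoly_part th) n = Polynomial.coeff A n" .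
qed

lemma lpoly_part_tpoly_add:
  assumes "r = 0 \<or> 0 < fls_subdegree r"
  shows "lpoly_part (tpoly A + r) = A"
proof (rule lpoly_part_eqI)
  fix j
  have "r $$ (- int j) = 0"
    using assms by (auto intro: fls_eq0_below_subdegree)
  then show "(tpoly A + r) $$ (- int j) = Polynomial.coeff A j"
    by (simp add: fls_nth_tpoly)
qed

lemma lpoly_part_0 [simp]: "lpoly_part 0 = 0"
  using lpoly_part_tpoly_add[of 0 0] by simp

lemma cf_step:
  assumes "cf_state x n = tpoly A + r" and "r = 0 \<or> 0 < fls_subdegree r"
  shows "cf_pq x n = A" and "cf_state x (Suc n) = inverse r"
  using lpoly_part_tpoly_add[OF assms(2)] assms(1) by (simp_all add: cf_pq_def)

lemma tpoly_divide_eq_div_plus_mod: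
  "tpoly a / tpoly b = tpoly (a div b) + tpoly (a mod b) / tpoly b"
proof (cases "b = 0")
  case False
  have "tpoly a = tpoly b * tpoly (a div b) + tpoly (a mod b)"
    by (simp flip: tpoly_mult tpoly_add)
  then show ?thesis
    using False by (simp add: field_simps)
qed simp

lemma fls_subdegree_tpoly_mod_divide_pos:
  assumes "b \<noteq> 0" and "a mod b \<noteq> 0"
  shows "0 < fls_subdegree (tpoly (a mod b) / tpoly b)"
proof -
  have "degree (a mod b) < degree b"
    using assms by (rule degree_mod_less')
  then show ?thesis
    using assms by (simp add: divide_inverse fls_subdegree_tpoly)
qed

text \<open>The continued fraction of a rational function \<open>a/b\<close> is the Euclidean algorithm on
  \<open>(a, b)\<close>, so its complete quotients vanish after at most \<open>deg b + 1\<close> steps.\<close>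
lemma cf_state_tpoly_divide:
  "\<exists>a' b'. cf_state (tpoly a / tpoly b) n = tpoly a' / tpoly b' \<and> (b' = 0 \<or> degree b' + n \<le> degree b)"
proof (induction n)
  case 0
  show ?case
    by (intro exI[of _ a] exI[of _ b]) simp
next
  case (Suc n)
  then obtain a' b' where state: "cf_state (tpoly a / tpoly b) n = tpoly a' / tpoly b'"
    and deg: "b' = 0 \<or> degree b' + n \<le> degree b"
    by blast
  show ?case
  proof (cases "b' = 0")
    case True
    then have "cf_state (tpoly a / tpoly b) (Suc n) = tpoly 0 / tpoly 0"
      using cf_step(2)[of _ n 0 0] state by simp
    then show ?thesis
      by (intro exI[of _ 0]) simp
  next
    case False
    have "tpoly (a' mod b') / tpoly b' = 0 \<or> 0 < fls_subdegree (tpoly (a' mod b') / tpoly b')"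
      using fls_subdegree_tpoly_mod_divide_pos[OF False, of a'] by (cases "a' mod b' = 0") simp_all
    then have "cf_state (tpoly a / tpoly b) (Suc n) = inverse (tpoly (a' mod b') / tpoly b')"
      by (rule cf_step(2)[OF trans[OF state tpoly_divide_eq_div_plus_mod]])
    then have "cf_state (tpoly a / tpoly b) (Suc n) = tpoly b' / tpoly (a' mod b')"
      by simp
    moreover have "a' mod b' = 0 \<or> degree (a' mod b') + Suc n \<le> degree b"
      using deg False degree_mod_less'[of b' a'] by linarith
    ultimately show ?thesis
      by (intro exI[of _ b'] exI[of _ "a' mod b'"]) simp
  qed
qed

lemma cf_pq_tpoly_divide_vanishes: "cf_pq (tpoly a / tpoly b) (Suc (degree b)) = 0"
proof -
  obtain a' b' where "cf_state (tpoly a / tpoly b) (Suc (degree b)) = tpoly a' / tpoly b'"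
    and "b' = 0 \<or> degree b' + Suc (degree b) \<le> degree b"
    using cf_state_tpoly_divide by blast
  then have "cf_state (tpoly a / tpoly b) (Suc (degree b)) = 0"
    by simp
  then show ?thesis
    by (simp add: cf_pq_def)
qed

lemma sqrt_diff_times_sqrt_add:
  fixes x :: "'a::field fls"
  assumes "x ^ 2 = tpoly a ^ 2 - inverse (tpoly D)" and "D \<noteq> 0"
  shows "(x - tpoly a) * (x + tpoly a) * tpoly D = -1"
proof -
  have "(x - tpoly a) * (x + tpoly a) = - inverse (tpoly D)"
    using assms(1) by (simp add: power2_eq_square algebra_simps)
  then show ?thesis
    using assms(2) by simp
qed

lemma fls_subdegree_sqrt_diff:
  fixes x :: "'a::field fls"
  assumes two: "(2::'a) \<noteq> 0" and "a \<noteq> 0" and D: "D \<noteq> 0"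
    and sq: "x ^ 2 = tpoly a ^ 2 - inverse (tpoly D)"
    and close: "- int (degree a) < fls_subdegree (x - tpoly a)"
  shows "fls_subdegree (x - tpoly a) = int (degree D) + int (degree a)"
proof -
  define y where "y = x - tpoly a"
  define z where "z = x + tpoly a"
  have yzD: "y * z * tpoly D = -1"
    unfolding y_def z_def using sq D by (rule sqrt_diff_times_sqrt_add)
  then have y0: "y \<noteq> 0" and z0: "z \<noteq> 0"
    by auto
  have "Polynomial.smult 2 a \<noteq> 0" and "degree (Polynomial.smult 2 a) = degree a"
    using two \<open>a \<noteq> 0\<close> by auto
  moreover have "2 * tpoly a = tpoly (Polynomial.smult 2 a)"
    by simp
  ultimately have two_a: "2 * tpoly a \<noteq> 0" "fls_subdegree (2 * tpoly a) = - int (degree a)"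
    by (simp_all del: tpoly_smult add: fls_subdegree_tpoly)
  have "z = 2 * tpoly a + y"
    by (simp add: y_def z_def)
  then have "fls_subdegree z = - int (degree a)"
    using fls_subdegree_add_eq1[OF two_a(1), of y] two_a(2) close[folded y_def] by simp
  moreover have "fls_subdegree (y * z * tpoly D) = 0"
    using yzD by simp
  ultimately show ?thesis
    using y0 z0 D by (simp add: y_def [symmetric] fls_subdegree_tpoly)
qed

text \<open>Continued fraction of \<open>x = \<surd>(a\<^sup>2 - 1/D)\<close>, the root being the one close to \<open>a\<close>: with
  \<open>y = x - a\<close> and \<open>z = x + a\<close> one has \<open>y z D = -1\<close>, so the complete quotients alternate between
  \<open>1/y = -z D\<close> and \<open>1/(-y D) = z\<close>.\<close>
lemma cf_pq_sqrt:
  fixes x :: "'a::field fls" and a D :: "'a poly"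
  assumes two: "(2::'a) \<noteq> 0" and deg_a: "0 < degree a" and D: "D \<noteq> 0"
    and sq: "x ^ 2 = tpoly a ^ 2 - inverse (tpoly D)"
    and close: "- int (degree a) < fls_subdegree (x - tpoly a)"
  shows "cf_pq x n = (if n = 0 then a else if odd n then - Polynomial.smult 2 (a * D)
                      else Polynomial.smult 2 a)"
proof -
  define y where "y = x - tpoly a"
  define z where "z = x + tpoly a"
  define S where "S n = (if n = 0 then x else if odd n then - (z * tpoly D) else z)" for n :: nat
  define Q where "Q n = (if n = 0 then a else if odd n then - Polynomial.smult 2 (a * D)
                        else Polynomial.smult 2 a)" for n :: nat
  define R where "R n = (if odd n then - (y * tpoly D) else y)" for n :: nat
  have yzD: "y * z * tpoly D = -1"
    unfolding y_def z_def using sq D by (rule sqrt_diff_times_sqrt_add)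
  then have y0: "y \<noteq> 0"
    by auto
  have deg_y: "fls_subdegree y = int (degree D) + int (degree a)"
    unfolding y_def using two deg_a D sq close by (intro fls_subdegree_sqrt_diff) auto
  have decomp: "S n = tpoly (Q n) + R n" for n
    by (simp add: S_def Q_def R_def y_def z_def algebra_simps)
  have R_pos: "0 < fls_subdegree (R n)" for n
    using deg_y deg_a y0 D by (simp add: R_def fls_subdegree_tpoly)
  have R_inv: "inverse (R n) = S (Suc n)" for n
    by (rule inverse_unique) (use yzD in \<open>auto simp: R_def S_def algebra_simps\<close>)
  have "cf_state x n = S n" for n
  proof (induction n)
    case (Suc n)
    then show ?case
      using cf_step(2)[OF trans[OF Suc decomp]] R_pos R_inv by simp
  qed (simp add: S_def)
  then have "cf_pq x n = Q n"
    using cf_step(1)[OF trans[OF _ decomp]] R_pos by blast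
  then show ?thesis
    by (simp add: Q_def)
qed

lemma sum_cf_period_idx_alternating:
  assumes pq: "\<And>i. 0 < i \<Longrightarrow> cf_pq x i = (if odd i then A else B)" and "A \<noteq> B"
  shows "(\<Sum>i\<in>cf_period_idx x. f (cf_pq x i)) = f A + f B"
proof -
  have periodic: "\<forall>m\<ge>1. cf_pq x (m + 2) = cf_pq x m"
    using pq by simp
  have "cf_period x = 2"
    unfolding cf_period_def
  proof (rule Least_equality)
    show "0 < (2::nat) \<and> (\<exists>N. \<forall>m\<ge>N. cf_pq x (m + 2) = cf_pq x m)"
      using periodic by auto
  next
    fix l assume l: "0 < l \<and> (\<exists>N. \<forall>m\<ge>N. cf_pq x (m + l) = cf_pq x m)"
    then obtain N where N: "\<forall>m\<ge>N. cf_pq x (m + l) = cf_pq x m"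
      by auto
    show "2 \<le> l"
    proof (rule ccontr)
      assume "\<not> 2 \<le> l"
      with l have "l = 1"
        by simp
      then have "cf_pq x (2 * N + 1 + 1) = cf_pq x (2 * N + 1)"
        using N[rule_format, of "2 * N + 1"] by simp
      then show False
        using pq \<open>A \<noteq> B\<close> by simp
    qed
  qed
  define N where "N = cf_preperiod x"
  have eventually_periodic: "\<forall>m\<ge>N. cf_pq x (m + 2) = cf_pq x m"
    using LeastI_ex[of "\<lambda>N. \<forall>m\<ge>N. cf_pq x (m + cf_period x) = cf_pq x m"] periodic
    unfolding N_def cf_preperiod_def \<open>cf_period x = 2\<close> by blast
  then have "cf_pq x N = cf_pq x (N + 2)" "cf_pq x (Suc N) = cf_pq x (Suc N + 2)"
    using eventually_periodic[rule_format, of "Suc N"] by simp_all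
  moreover have "cf_period_idx x = {N, Suc N}"
    unfolding cf_period_idx_def N_def[symmetric] \<open>cf_period x = 2\<close> by auto
  ultimately show ?thesis
    using pq by (cases "even N") (simp_all add: add.commute)
qed

lemma escape_ratio_le_1: "escape_ratio th P k n \<le> 1"
proof -
  define x where "x = th * tpoly (P ^ k)"
  define a where "a = (\<Sum>i\<in>cf_period_idx x. max (degree (cf_pq x i) - n) 0)"
  define b where "b = (\<Sum>i\<in>cf_period_idx x. degree (cf_pq x i))"
  have "a \<le> b"
    unfolding a_def b_def by (intro sum_mono) simp
  then have "real a / real b \<le> 1"
    by (cases "b = 0") (simp_all add: divide_le_eq_1)
  then show ?thesis
    by (simp only: escape_ratio_def Let_def x_def [symmetric] a_def [symmetric] b_def [symmetric])
qed

lemma escape_ratio_alternating: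
  assumes pq: "\<And>i. 0 < i \<Longrightarrow> cf_pq (th * tpoly (P ^ k)) i = (if odd i then A else B)"
    and deg: "degree A \<noteq> degree B"
  shows "escape_ratio th P k n = real ((degree A - n) + (degree B - n)) / real (degree A + degree B)"
proof -
  have "A \<noteq> B"
    using deg by auto
  note period_sum = sum_cf_period_idx_alternating[OF pq this]
  show ?thesis
    unfolding escape_ratio_def Let_def
    using period_sum[of "\<lambda>q. max (degree q - n) 0"] period_sum[of degree] by simp
qed

lemma truncated_sum_ratio_ge:
  fixes a b n :: nat
  assumes "0 < a + b"
  shows "1 - 2 * real n / real (a + b) \<le> real ((a - n) + (b - n)) / real (a + b)"
proof -
  define s where "s = real (a + b)"
  have "s \<noteq> 0"
    unfolding s_def using assms by (simp only: of_nat_0_less_iff less_numeral_extra(3))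
  then have "1 - 2 * real n / real (a + b) = (real (a + b) - 2 * real n) / real (a + b)"
    unfolding s_def [symmetric] by (simp add: field_simps)
  also have "\<dots> \<le> real ((a - n) + (b - n)) / real (a + b)"
    by (intro divide_right_mono) (linarith, simp)
  finally show ?thesis .
qed

lemma limsup_eq_1_if_subseq_tendsto_1:
  fixes u :: "nat \<Rightarrow> real"
  assumes le_1: "\<And>k. u k \<le> 1" and "strict_mono r" and "(u \<circ> r) \<longlonglongrightarrow> 1"
  shows "limsup (\<lambda>k. ereal (u k)) = 1"
proof (rule antisym)
  show "limsup (\<lambda>k. ereal (u k)) \<le> 1"
    by (rule Limsup_bounded) (simp add: le_1)
  have "((\<lambda>k. ereal (u k)) \<circ> r) \<longlonglongrightarrow> ereal 1"
    using tendsto_ereal[OF assms(3)] by (simp add: o_def)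
  then have "limsup ((\<lambda>k. ereal (u k)) \<circ> r) = 1"
    using lim_imp_Limsup[OF trivial_limit_sequentially] by (simp add: one_ereal_def)
  then show "1 \<le> limsup (\<lambda>k. ereal (u k))"
    using limsup_subseq_mono[OF assms(2), of "\<lambda>k. ereal (u k)"] by simp
qed

section \<open>The \<open>p\<close>-Cantor series\<close>

definition cantor_weight :: "nat \<Rightarrow> 'a::field fps" where
  "cantor_weight p = (1 + fps_X ^ 2) ^ ((p - 1) div 2)"

lemma fps_nth_one_plus_X_squared_power:
  "((1 + fps_X ^ 2) ^ m :: 'a::comm_ring_1 fps) $ r = (if even r then of_nat (m choose (r div 2)) else 0)"
proof -
  have "(1 + fps_X ^ 2) ^ m = (\<Sum>k\<le>m. fps_const (of_nat (m choose k)) * fps_X ^ (2 * k) :: 'a fps)"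
    using binomial_ring[of "fps_X ^ 2 :: 'a fps" 1 m] by (simp add: add.commute power_mult fps_of_nat)
  then have "((1 + fps_X ^ 2) ^ m :: 'a fps) $ r = (\<Sum>k\<le>m. of_nat (m choose k) * (if r = 2 * k then 1 else 0))"
    by (simp add: fps_sum_nth)
  also have "\<dots> = (\<Sum>k\<le>m. if even r \<and> k = r div 2 then of_nat (m choose k) else 0)"
    by (intro sum.cong) auto
  also have "\<dots> = (if even r then of_nat (m choose (r div 2)) else 0)"
    by (auto simp: binomial_eq_0)
  finally show ?thesis .
qed

lemma cantor_weight_nth_eq_0:
  assumes "odd p" and "p \<le> r"
  shows "cantor_weight p $ r = 0"
proof -
  have "(p - 1) div 2 < r div 2" if "even r"
    using assms that by (elim oddE evenE) auto
  then show ?thesis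
    by (simp add: cantor_weight_def fps_nth_one_plus_X_squared_power binomial_eq_0)
qed

lemma cantor_phi_Nil [simp]: "cantor_phi p [] = []"
  by (simp add: cantor_phi_def)

lemma cantor_phi_Cons: "cantor_phi p (c # w) = map (\<lambda>r. c * cantor_weight p $ r) [0..<p] @ cantor_phi p w"
  by (simp add: cantor_phi_def cantor_weight_def fps_nth_one_plus_X_squared_power)

lemma cantor_phi_append: "cantor_phi p (u @ v) = cantor_phi p u @ cantor_phi p v"
  by (simp add: cantor_phi_def)

lemma length_cantor_phi: "length (cantor_phi p w) = p * length w"
  by (induction w) (simp_all add: cantor_phi_Cons)

lemma nth_cantor_phi:
  "i < length w \<Longrightarrow> r < p \<Longrightarrow> cantor_phi p w ! (p * i + r) = w ! i * cantor_weight p $ r"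
proof (induction w arbitrary: i)
  case (Cons c w)
  then show ?case
    by (cases i) (simp_all add: cantor_phi_Cons nth_append)
qed simp

lemma prefix_cantor_phi: "prefix u v \<Longrightarrow> prefix (cantor_phi p u) (cantor_phi p v)"
  by (auto elim!: prefixE simp: cantor_phi_append)

lemma prefix_funpow_cantor_phi:
  "prefix u v \<Longrightarrow> prefix ((cantor_phi p ^^ n) u) ((cantor_phi p ^^ n) v)"
  by (induction n) (simp_all add: prefix_cantor_phi)

lemma prefix_cantor_phi_iterate:
  assumes "0 < p" and "m \<le> n"
  shows "prefix ((cantor_phi p ^^ m) [1]) ((cantor_phi p ^^ n) [1])"
  using assms(2)
proof (induction n rule: dec_induct)
  case (step n)
  have "prefix [1] (cantor_phi p [1])"
    using assms(1) by (simp add: cantor_phi_Cons upt_rec cantor_weight_def fps_nth_one_plus_X_squared_power)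
  then have "prefix ((cantor_phi p ^^ n) [1]) ((cantor_phi p ^^ n) (cantor_phi p [1]))"
    by (rule prefix_funpow_cantor_phi)
  then show ?case
    unfolding funpow_Suc_right comp_apply by (rule prefix_order.trans[OF step.IH])
qed simp

lemma length_cantor_phi_iterate: "length ((cantor_phi p ^^ n) [1]) = p ^ n"
  by (induction n) (simp_all add: length_cantor_phi)

lemma nth_cantor_phi_iterate:
  assumes "1 < p" and "i < p ^ n"
  shows "(cantor_phi p ^^ n) [1] ! i = (cantor_seq p i :: 'a::field)"
proof -
  define w :: "nat \<Rightarrow> 'a list" where "w k = (cantor_phi p ^^ k) [1]" for k
  have nth: "ys ! i = xs ! i" if "prefix xs ys" "i < length xs" for xs ys :: "'a list"
    using that by (auto elim!: prefixE simp: nth_append)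
  define m where "m = max n (Suc i)"
  have p: "0 < p" and m: "n \<le> m" "Suc i \<le> m"
    using assms(1) by (simp_all add: m_def)
  have "i < length (w n)"
    using assms(2) by (simp add: w_def length_cantor_phi_iterate)
  then have "w m ! i = w n ! i"
    using nth prefix_cantor_phi_iterate[OF p m(1)] by (simp add: w_def)
  moreover have "i < length (w (Suc i))"
    using assms(1) power_gt_expt[of p "Suc i"]
    by (simp add: w_def length_cantor_phi_iterate del: funpow.simps)
  then have "w m ! i = w (Suc i) ! i"
    using nth prefix_cantor_phi_iterate[OF p m(2)] by (simp add: w_def)
  ultimately show ?thesis
    by (simp add: w_def cantor_seq_def)
qed

lemma cantor_seq_0: "0 < p \<Longrightarrow> cantor_seq p 0 = 1"
  by (simp add: cantor_seq_def cantor_phi_Cons cantor_weight_def fps_nth_one_plus_X_squared_power)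

lemma cantor_seq_mult_add:
  assumes "1 < p" and "r < p"
  shows "cantor_seq p (p * i + r) = cantor_seq p i * cantor_weight p $ r"
proof -
  define w :: "'a list" where "w = (cantor_phi p ^^ Suc i) [1]"
  have i: "i < p ^ Suc i"
    using assms(1) power_gt_expt[of p "Suc i"] by simp
  have "p * i + r < p * Suc i"
    using assms(2) by simp
  also have "\<dots> \<le> p * p ^ Suc i"
    using i by (intro mult_le_mono2) simp
  finally have "p * i + r < p ^ Suc (Suc i)"
    by simp
  then have "cantor_seq p (p * i + r) = (cantor_phi p ^^ Suc (Suc i)) [1] ! (p * i + r)"
    using assms(1) by (intro nth_cantor_phi_iterate[symmetric])
  also have "\<dots> = cantor_phi p w ! (p * i + r)"
    by (simp add: w_def)
  also have "\<dots> = w ! i * cantor_weight p $ r"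
    using i assms(2) by (intro nth_cantor_phi) (simp_all add: w_def length_cantor_phi_iterate del: funpow.simps)
  also have "w ! i = cantor_seq p i"
    using nth_cantor_phi_iterate[OF assms(1) i] by (simp add: w_def)
  finally show ?thesis .
qed

definition cantor_fps :: "nat \<Rightarrow> 'a::field fps" where
  "cantor_fps p = Abs_fps (cantor_seq p)"

lemma Theta_fps_eq: "Theta_fps p = fps_X * cantor_fps p"
  by (rule fps_ext) (simp add: Theta_fps_def cantor_fps_def)

lemma cantor_fps_eq:
  assumes "odd p" and "1 < p"
  shows "cantor_fps p = cantor_weight p * (cantor_fps p oo fps_X ^ p :: 'a::field fps)"
proof (rule fps_ext)
  fix n
  define U :: "'a fps" where "U = cantor_fps p oo fps_X ^ p"
  have "(cantor_weight p * U) $ n = (\<Sum>r=0..n. cantor_weight p $ r * U $ (n - r))"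
    by (rule fps_mult_nth)
  also have "\<dots> = (\<Sum>r\<in>{n mod p}. cantor_weight p $ r * U $ (n - r))"
  proof (intro sum.mono_neutral_right ballI)
    fix r assume r: "r \<in> {0..n} - {n mod p}"
    show "cantor_weight p $ r * U $ (n - r) = 0"
    proof (cases "p \<le> r")
      case False
      then have "n mod p \<noteq> r mod p"
        using r by simp
      then have "\<not> p dvd (n - r)"
        using r by (simp add: mod_eq_dvd_iff_nat)
      then show ?thesis
        by (simp add: U_def fps_nth_compose_X_power)
    qed (simp add: cantor_weight_nth_eq_0 assms(1))
  qed (auto simp: mod_less_eq_dividend)
  also have "\<dots> = cantor_weight p $ (n mod p) * cantor_seq p (n div p)"
    by (simp add: U_def fps_nth_compose_X_power cantor_fps_def minus_mod_eq_mult_div)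
  also have "\<dots> = cantor_seq p n"
    using cantor_seq_mult_add[where 'a='a, OF assms(2), of "n mod p" "n div p"] assms(2)
    by (simp add: mult.commute)
  finally show "cantor_fps p $ n = (cantor_weight p * U) $ n"
    by (simp add: cantor_fps_def)
qed

lemma fps_compose_X_power_fixed_imp_const:
  fixes f :: "'a::comm_ring_1 fps"
  assumes "1 < d" and fixed: "f oo fps_X ^ d = f"
  shows "f = fps_const (f $ 0)"
proof -
  have "f $ n = 0" if "0 < n" for n
    using that
  proof (induction n rule: less_induct)
    case (less n)
    have "f $ n = (if d dvd n then f $ (n div d) else 0)"
      by (subst fixed [symmetric]) (simp add: fps_nth_compose_X_power)
    also have "\<dots> = 0"
      using less assms(1) by (auto elim!: dvdE)
    finally show ?case .
  qed
  then show ?thesis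
    by (intro fps_ext) simp
qed

lemma prime_CHAR_odd: "odd CHAR('a::field) \<Longrightarrow> prime CHAR('a)"
  by (rule prime_CHAR_semidom) (auto intro: odd_pos)

lemma cantor_fps_square:
  assumes char: "CHAR('a::field) = p" and "odd p"
  shows "cantor_fps p ^ 2 * (1 + fps_X ^ 2) = (1 :: 'a fps)"
proof -
  define Z :: "'a fps" where "Z = cantor_fps p ^ 2 * (1 + fps_X ^ 2)"
  have "prime p"
    using prime_CHAR_odd[where 'a='a] assms by simp
  then have p: "1 < p" "(fps_X ^ p :: 'a fps) $ 0 = 0"
    using prime_gt_1_nat by simp_all
  obtain e where e: "p = 2 * e + 1"
    using assms(2) by (elim oddE)
  then have "cantor_weight p ^ 2 * (1 + fps_X ^ 2) = ((1 + fps_X ^ 2) ^ p :: 'a fps)"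
    unfolding cantor_weight_def by (simp add: power_add mult.commute flip: power_mult)
  also have "\<dots> = 1 + fps_X ^ (2 * p)"
    using \<open>prime p\<close> char by (subst freshmans_dream) (simp_all add: power_mult)
  also have "\<dots> = (1 + fps_X ^ 2) oo fps_X ^ p"
    using p(2) by (simp add: fps_compose_add_distrib fps_compose_power[symmetric] power_mult mult.commute)
  finally have weight: "cantor_weight p ^ 2 * (1 + fps_X ^ 2) = ((1 + fps_X ^ 2) oo fps_X ^ p :: 'a fps)" .
  have "Z = cantor_weight p ^ 2 * (1 + fps_X ^ 2) * (cantor_fps p oo fps_X ^ p) ^ 2"
    unfolding Z_def by (subst cantor_fps_eq[OF assms(2) p(1)]) (simp add: power_mult_distrib mult_ac)
  also have "\<dots> = Z oo fps_X ^ p"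
    unfolding weight Z_def
    by (simp add: fps_compose_mult_distrib[OF p(2)] fps_compose_power[OF p(2)] mult.commute)
  finally have "Z = fps_const (Z $ 0)"
    by (intro fps_compose_X_power_fixed_imp_const[OF p(1)]) (rule sym)
  moreover have "Z $ 0 = 1"
    using p(1) by (simp add: Z_def cantor_fps_def cantor_seq_0 power2_eq_square)
  ultimately show ?thesis
    by (simp add: Z_def)
qed

section \<open>The series \<open>\<Theta>\<^sub>p(P)\<close>\<close>

context
  fixes p :: nat and P :: "'a::field poly"
  assumes char: "CHAR('a) = p" and odd_p: "odd p" and deg_P: "0 < degree P"
begin

lemma prime_p: "prime p"
  using prime_CHAR_odd[where 'a='a] char odd_p by simp

lemma two_nonzero: "(2::'a) \<noteq> 0"
  using char odd_p of_nat_eq_0_iff_char_dvd[of 2, where 'a='a] prime_ge_2_nat[OF prime_p]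
  by (auto dest: dvd_imp_le)

lemma Theta_at_eq:
  obtains G where "fps_to_fls G = inverse (tpoly P)" and "G $ 0 = 0"
    and "Theta_at p P = fps_to_fls G * fps_to_fls (cantor_fps p oo G)"
proof -
  define G where "G = fls_regpart (inverse (tpoly P))"
  have P: "P \<noteq> 0"
    using deg_P by auto
  then have subdegree: "fls_subdegree (inverse (tpoly P)) = int (degree P)"
    by (simp add: fls_subdegree_tpoly)
  then have G: "fps_to_fls G = inverse (tpoly P)"
    by (simp add: G_def)
  have G0: "G $ 0 = 0"
    unfolding G_def using subdegree deg_P by (simp add: fls_eq0_below_subdegree)
  have "Theta_fps p oo G = G * (cantor_fps p oo G)"
    unfolding Theta_fps_eq by (simp add: fps_compose_mult_distrib[OF G0] G0)
  then have "Theta_at p P = fps_to_fls G * fps_to_fls (cantor_fps p oo G)"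
    unfolding Theta_at_def G_def[symmetric] by (simp add: fls_times_fps_to_fls)
  with G G0 show thesis
    by (rule that)
qed

lemma Theta_at_square: "tpoly (P ^ 2 + 1) * Theta_at p P ^ 2 = 1"
proof -
  obtain G where G: "fps_to_fls G = inverse (tpoly P)" and G0: "G $ 0 = 0"
    and Theta: "Theta_at p P = fps_to_fls G * fps_to_fls (cantor_fps p oo G)"
    by (rule Theta_at_eq)
  have "(cantor_fps p ^ 2 * (1 + fps_X ^ 2)) oo G = 1"
    using cantor_fps_square[OF char odd_p] by simp
  then have "(cantor_fps p oo G) ^ 2 * (1 + G ^ 2) = 1"
    using G0 by (simp add: fps_compose_mult_distrib fps_compose_add_distrib fps_compose_power
        fps_X_power_compose)
  then have "fps_to_fls ((cantor_fps p oo G) ^ 2 * (1 + G ^ 2)) = 1"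
    by simp
  then have w: "fps_to_fls (cantor_fps p oo G) ^ 2 * (1 + fps_to_fls G ^ 2) = 1"
    unfolding fls_times_fps_to_fls fps_to_fls_power fps_to_fls_plus by simp
  have "tpoly P \<noteq> 0"
    using deg_P by auto
  then have "tpoly P * fps_to_fls G = 1"
    by (simp add: G)
  have "tpoly (P ^ 2 + 1) * Theta_at p P ^ 2
      = fps_to_fls (cantor_fps p oo G) ^ 2 * ((tpoly P * fps_to_fls G) ^ 2 + fps_to_fls G ^ 2)"
    unfolding Theta by (simp add: power_mult_distrib algebra_simps)
  also have "\<dots> = 1"
    using w \<open>tpoly P * fps_to_fls G = 1\<close> by simp
  finally show ?thesis .
qed

lemma degree_square_plus_1: "degree (P ^ 2 + 1) = 2 * degree P"
proof -
  have "P \<noteq> 0"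
    using deg_P by auto
  then show ?thesis
    using deg_P by (subst degree_add_eq_left) (simp_all add: degree_power_eq)
qed

lemma square_plus_1_nonzero: "P ^ 2 + 1 \<noteq> 0"
  using degree_square_plus_1 deg_P by auto

text \<open>\<open>\<Phi> P\<^sup>k\<close> and \<open>(P\<^sup>2 + 1)\<^bsup>(k-1)/2\<^esup>\<close> are both \<open>P\<^bsup>k-1\<^esup>\<close> times a power series with constant term 1.\<close>
lemma Theta_at_times_power_close:
  assumes "odd k" and "1 < k"
  shows "- int (degree ((P ^ 2 + 1) ^ (k div 2)))
    < fls_subdegree (Theta_at p P * tpoly (P ^ k) - tpoly ((P ^ 2 + 1) ^ (k div 2)))"
proof -
  obtain G where G: "fps_to_fls G = inverse (tpoly P)" and G0: "G $ 0 = 0"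
    and Theta: "Theta_at p P = fps_to_fls G * fps_to_fls (cantor_fps p oo G)"
    by (rule Theta_at_eq)
  define e where "e = k div 2"
  define F where "F = (cantor_fps p oo G) - (1 + G ^ 2) ^ e"
  have k: "k = 2 * e + 1" and "0 < e"
    using assms by (auto simp: e_def elim!: oddE)
  have P: "P \<noteq> 0" "tpoly P \<noteq> 0"
    using deg_P by auto
  have deg: "degree ((P ^ 2 + 1) ^ e) = 2 * e * degree P"
    by (simp add: degree_power_eq square_plus_1_nonzero degree_square_plus_1)
  have "Theta_at p P * tpoly (P ^ k) - tpoly ((P ^ 2 + 1) ^ e) = tpoly P ^ (2 * e) * fps_to_fls F"
  proof -
    have "tpoly (P ^ 2 + 1) = tpoly P ^ 2 * (1 + fps_to_fls G ^ 2)"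
      using P by (simp add: G field_simps power2_eq_square)
    then have "tpoly ((P ^ 2 + 1) ^ e) = tpoly P ^ (2 * e) * fps_to_fls ((1 + G ^ 2) ^ e)"
      by (simp add: fps_to_fls_power power_mult_distrib power_mult)
    moreover have "Theta_at p P * tpoly (P ^ k) = tpoly P ^ (2 * e) * fps_to_fls (cantor_fps p oo G)"
      using P by (simp add: Theta G k field_simps)
    ultimately show ?thesis
      by (simp add: F_def algebra_simps)
  qed
  moreover have "1 \<le> fls_subdegree (fps_to_fls F)" if "F \<noteq> 0"
  proof -
    have "F $ 0 = 0"
      using G0 deg_P by (simp add: F_def cantor_fps_def cantor_seq_0 odd_pos odd_p fps_power_zeroth)
    then have "subdegree F \<noteq> 0"
      using that subdegree_eq_0_iff[of F] by blast
    then show ?thesis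
      by (simp add: fls_subdegree_fls_to_fps)
  qed
  ultimately show ?thesis
    using P \<open>0 < e\<close> deg_P by (cases "F = 0") (simp_all add: fls_subdegree_pow fls_subdegree_tpoly deg
        flip: e_def)
qed

lemma cf_pq_Theta_at_times_power:
  assumes k: "k = p ^ j" and "0 < j"
  defines "D \<equiv> P ^ 2 + 1" and "a \<equiv> (P ^ 2 + 1) ^ (k div 2)"
  shows "cf_pq (Theta_at p P * tpoly (P ^ k)) n
    = (if n = 0 then a else if odd n then - Polynomial.smult 2 (a * D) else Polynomial.smult 2 a)"
proof (rule cf_pq_sqrt)
  have "odd k"
    using k odd_p by simp
  moreover have "p \<le> k"
    using k \<open>0 < j\<close> prime_gt_0_nat[OF prime_p] by (simp add: self_le_power)
  then have "1 < k"
    using prime_gt_1_nat[OF prime_p] by simp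
  ultimately obtain e where ke: "k = 2 * e + 1" and "0 < e" and a: "a = D ^ e"
    by (auto simp: a_def D_def elim!: oddE)
  show "(2::'a) \<noteq> 0"
    by (rule two_nonzero)
  show "0 < degree a"
    using \<open>0 < e\<close> deg_P
    by (simp add: a D_def degree_power_eq square_plus_1_nonzero degree_square_plus_1)
  show D: "D \<noteq> 0"
    by (simp add: D_def square_plus_1_nonzero)
  have "D ^ k = P ^ (2 * k) + 1"
    unfolding D_def using prime_p char k by (subst freshmans_dream') (simp_all add: power_mult)
  then have Pk: "tpoly P ^ (2 * k) = tpoly D ^ (2 * e) * tpoly D - 1"
    unfolding ke by (simp flip: tpoly_power tpoly_mult add: power_add algebra_simps)
  have "(Theta_at p P * tpoly (P ^ k)) ^ 2 = Theta_at p P ^ 2 * tpoly P ^ (2 * k)"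
    by (simp add: power_mult_distrib mult.commute flip: power_mult)
  also have "\<dots> = inverse (tpoly D) * (tpoly D ^ (2 * e) * tpoly D - 1)"
    using inverse_unique[OF Theta_at_square[folded D_def]] Pk by simp
  also have "\<dots> = tpoly a ^ 2 - inverse (tpoly D)"
    using D by (simp add: a field_simps flip: power_mult)
  finally show "(Theta_at p P * tpoly (P ^ k)) ^ 2 = tpoly a ^ 2 - inverse (tpoly D)" .
  show "- int (degree a) < fls_subdegree (Theta_at p P * tpoly (P ^ k) - tpoly a)"
    using Theta_at_times_power_close[OF \<open>odd k\<close> \<open>1 < k\<close>] by (simp add: a_def)
qed

lemma escape_ratio_Theta_at_power:
  assumes k: "k = p ^ j" and "0 < j"
  shows "escape_ratio (Theta_at p P) P k n
    = real ((degree P * (k + 1) - n) + (degree P * (k - 1) - n)) / real (2 * degree P * k)"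
proof -
  define D where "D = P ^ 2 + 1"
  define a where "a = D ^ (k div 2)"
  have "odd k"
    using odd_p by (simp add: k)
  then obtain e where e: "k = 2 * e + 1"
    by (elim oddE)
  have "D \<noteq> 0" and deg_D: "degree D = 2 * degree P"
    by (simp_all add: D_def square_plus_1_nonzero degree_square_plus_1)
  then have "a \<noteq> 0" and "degree a = e * degree D"
    by (simp_all add: a_def e degree_power_eq)
  then have deg_A: "degree (- Polynomial.smult 2 (a * D)) = degree P * (k + 1)"
    and deg_B: "degree (Polynomial.smult 2 a) = degree P * (k - 1)"
    using two_nonzero \<open>D \<noteq> 0\<close> deg_D by (simp_all add: e degree_mult_eq algebra_simps)
  have total: "2 * degree P * k = degree P * (k + 1) + degree P * (k - 1)"
    by (simp add: e algebra_simps)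
  show ?thesis
    unfolding total deg_A [symmetric] deg_B [symmetric]
  proof (rule escape_ratio_alternating)
    show "cf_pq (Theta_at p P * tpoly (P ^ k)) i
        = (if odd i then - Polynomial.smult 2 (a * D) else Polynomial.smult 2 a)" if "0 < i" for i
      using cf_pq_Theta_at_times_power[OF k \<open>0 < j\<close>, of i] that by (simp add: a_def D_def)
    show "degree (- Polynomial.smult 2 (a * D)) \<noteq> degree (Polynomial.smult 2 a)"
      unfolding deg_A deg_B using deg_P e by simp
  qed
qed

lemma escape_ratio_Theta_at_ge:
  assumes "0 < j"
  shows "1 - real n / real (p ^ j) \<le> escape_ratio (Theta_at p P) P (p ^ j) n"
proof -
  define k where "k = p ^ j"
  have "0 < k"
    using prime_gt_0_nat[OF prime_p] by (simp add: k_def)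
  then have "2 * k \<le> 2 * degree P * k"
    using deg_P by simp
  then have "real (2 * k) \<le> real (2 * degree P * k)"
    by (rule of_nat_mono)
  then have "2 * real n / real (2 * degree P * k) \<le> 2 * real n / real (2 * k)"
    using \<open>0 < k\<close> by (intro divide_left_mono) simp_all
  then have "1 - real n / real k \<le> 1 - 2 * real n / real (2 * degree P * k)"
    by simp
  also have "\<dots> \<le> escape_ratio (Theta_at p P) P k n"
  proof -
    have total: "degree P * (k + 1) + degree P * (k - 1) = 2 * degree P * k"
      using \<open>0 < k\<close> by (cases k) (simp_all add: algebra_simps)
    show ?thesis
      using truncated_sum_ratio_ge[of "degree P * (k + 1)" "degree P * (k - 1)" n] \<open>0 < k\<close> deg_P
      unfolding total escape_ratio_Theta_at_power[OF k_def \<open>0 < j\<close>] by simp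
  qed
  finally show ?thesis
    by (simp add: k_def)
qed

lemma limsup_escape_ratio_Theta_at: "limsup (\<lambda>k. ereal (escape_ratio (Theta_at p P) P k n)) = 1"
proof (rule limsup_eq_1_if_subseq_tendsto_1)
  have p: "1 < real p"
    using prime_gt_1_nat[OF prime_p] by simp
  show "escape_ratio (Theta_at p P) P k n \<le> 1" for k
    by (rule escape_ratio_le_1)
  show "strict_mono (\<lambda>j. p ^ Suc j)"
    using p by (intro strict_monoI power_strict_increasing) simp_all
  have "(\<lambda>j. 1 - real n / real p ^ Suc j) \<longlonglongrightarrow> 1 - 0"
    using LIMSEQ_Suc[OF LIMSEQ_divide_realpow_zero[OF p]] by (intro tendsto_diff) simp_all
  then have lower: "(\<lambda>j. 1 - real n / real p ^ Suc j) \<longlonglongrightarrow> 1"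
    by simp
  show "((\<lambda>k. escape_ratio (Theta_at p P) P k n) \<circ> (\<lambda>j. p ^ Suc j)) \<longlonglongrightarrow> 1"
  proof (rule tendsto_sandwich[OF _ _ lower tendsto_const])
    show "\<forall>\<^sub>F j in sequentially. 1 - real n / real p ^ Suc j
        \<le> ((\<lambda>k. escape_ratio (Theta_at p P) P k n) \<circ> (\<lambda>j. p ^ Suc j)) j"
      using escape_ratio_Theta_at_ge[of "Suc _" n] by (intro always_eventually allI) simp
    show "\<forall>\<^sub>F j in sequentially. ((\<lambda>k. escape_ratio (Theta_at p P) P k n) \<circ> (\<lambda>j. p ^ Suc j)) j \<le> 1"
      using escape_ratio_le_1 by (intro always_eventually allI) simp
  qed
qed

lemma quadratic_irrational_Theta_at: "quadratic_irrational (Theta_at p P)"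
  unfolding quadratic_irrational_def
proof (intro conjI notI)
  show "\<exists>a b c. a \<noteq> 0 \<and> tpoly a * Theta_at p P ^ 2 + tpoly b * Theta_at p P + tpoly c = 0"
    using Theta_at_square square_plus_1_nonzero
    by (intro exI[of _ "P ^ 2 + 1"] exI[of _ 0] exI[of _ "- 1"]) simp
next
  assume "\<exists>u v. v \<noteq> 0 \<and> tpoly v * Theta_at p P = tpoly u"
  then obtain u v where "v \<noteq> 0" and "tpoly v * Theta_at p P = tpoly u"
    by blast
  then have rational: "Theta_at p P * tpoly (P ^ p) = tpoly (u * P ^ p) / tpoly v"
    by (simp add: field_simps)
  have "cf_pq (Theta_at p P * tpoly (P ^ p)) (Suc (degree v)) = 0"
    unfolding rational by (rule cf_pq_tpoly_divide_vanishes)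
  moreover have "cf_pq (Theta_at p P * tpoly (P ^ p)) (Suc (degree v)) \<noteq> 0"
    using cf_pq_Theta_at_times_power[of p 1] two_nonzero square_plus_1_nonzero by simp
  ultimately show False
    by simp
qed

end

theorem theorem1p23:
  fixes p :: nat and P :: "'a::field poly"
  assumes "prime p" and "odd p" and "card (UNIV :: 'a set) = p" and "irreducible P"
  shows "quadratic_irrational (Theta_at p P) \<and> full_max_escape (Theta_at p P) P"
proof -
  have "CHAR('a) dvd p"
    using CHAR_dvd_CARD[where 'a='a] assms(3) by simp
  then have char: "CHAR('a) = p"
    using assms(1) CHAR_not_1[where 'a='a] by (auto simp: prime_nat_iff)
  have "P \<noteq> 0" and "\<not> is_unit P"
    using assms(4) by (auto simp: irreducible_def)
  then have deg: "0 < degree P"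
    using is_unit_iff_degree by blast
  have "full_max_escape (Theta_at p P) P"
    unfolding full_max_escape_def c_max_escape_def
    using limsup_escape_ratio_Theta_at[OF char assms(2) deg] by (intro exI[of _ 1]) simp
  then show ?thesis
    using quadratic_irrational_Theta_at[OF char assms(2) deg] by blast
qed

end
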